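(* Let $k$ be any field and $d$ a positive integer. Then $$S_{d+1}(x_1,\ldots,x_{d+1})\equiv S_d(x_1,\ldots,x_d)\,x_{d+1}\equiv x_{d+1}\,S_d(x_1,\ldots,x_d)\pmod{R_1^{(d)}},$$ i.e. the pairwise differences of these three elements lie in $R_1^{(d)}$.
   Context: $X=\{x_1,x_2,\ldots\}$ is a countably infinite set and $k_0\langle X\rangle$ is the free associative $k$-algebra (without identity) on $X$. A $T$-space is a $k$-linear subspace closed under every algebra endomorphism of $k_0\langle X\rangle$; the $T$-space generated by a subset is the smallest $T$-space containing it. $S_d(v_1,\ldots,v_d)=\sum_{\sigma\in\Sigma_d}\prod_{i=1}^d v_{\sigma(i)}$, and $R_1^{(d)}$ is the $T$-space generated by $S_d(x_1,\ldots,x_d)$. *)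

theory Defs
  imports "HOL-Combinatorics.Permutations"
begin

text \<open>The free associative k-algebra without identity on X = {x_0, x_1, ...}:
  finitely supported k-valued functions on words (lists of variable indices),
  with coefficient 0 on the empty word.\<close>

typedef (overloaded) 'k ncpoly =
  "{f :: nat list \<Rightarrow> 'k::zero. finite {w. f w \<noteq> 0} \<and> f [] = 0}"
  by (rule exI[of _ "\<lambda>_. 0"]) simp

definition coeff :: "'k::zero ncpoly \<Rightarrow> nat list \<Rightarrow> 'k" where
  "coeff p = Rep_ncpoly p"

definition nc_zero :: "'k::zero ncpoly" where
  "nc_zero = Abs_ncpoly (\<lambda>_. 0)"

definition nc_add :: "'k::field ncpoly \<Rightarrow> 'k ncpoly \<Rightarrow> 'k ncpoly" where
  "nc_add p q = Abs_ncpoly (\<lambda>w. coeff p w + coeff q w)"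

definition nc_diff :: "'k::field ncpoly \<Rightarrow> 'k ncpoly \<Rightarrow> 'k ncpoly" where
  "nc_diff p q = Abs_ncpoly (\<lambda>w. coeff p w - coeff q w)"

definition nc_smult :: "'k::field \<Rightarrow> 'k ncpoly \<Rightarrow> 'k ncpoly" where
  "nc_smult c p = Abs_ncpoly (\<lambda>w. c * coeff p w)"

definition nc_mult :: "'k::field ncpoly \<Rightarrow> 'k ncpoly \<Rightarrow> 'k ncpoly" where
  "nc_mult p q = Abs_ncpoly (\<lambda>w. \<Sum>i\<in>{0..length w}. coeff p (take i w) * coeff q (drop i w))"

definition var :: "nat \<Rightarrow> 'k::field ncpoly" where
  "var i = Abs_ncpoly (\<lambda>w. if w = [i] then 1 else 0)"

fun word_prod :: "(nat \<Rightarrow> 'k::field ncpoly) \<Rightarrow> nat list \<Rightarrow> 'k ncpoly" where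
  "word_prod v [] = nc_zero"
| "word_prod v [a] = v a"
| "word_prod v (a # b # w) = nc_mult (v a) (word_prod v (b # w))"

text \<open>The algebra endomorphism sending x_i to phi i, applied to p.\<close>
definition subst :: "(nat \<Rightarrow> 'k::field ncpoly) \<Rightarrow> 'k ncpoly \<Rightarrow> 'k ncpoly" where
  "subst \<phi> p = Abs_ncpoly (\<lambda>u. \<Sum>w\<in>{w. coeff p w \<noteq> 0}. coeff p w * coeff (word_prod \<phi> w) u)"

definition is_Tspace :: "'k::field ncpoly set \<Rightarrow> bool" where
  "is_Tspace V \<longleftrightarrow> nc_zero \<in> V
     \<and> (\<forall>p\<in>V. \<forall>q\<in>V. nc_add p q \<in> V)
     \<and> (\<forall>c. \<forall>p\<in>V. nc_smult c p \<in> V)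
     \<and> (\<forall>\<phi>. \<forall>p\<in>V. subst \<phi> p \<in> V)"

definition Tspace_gen :: "'k::field ncpoly set \<Rightarrow> 'k ncpoly set" where
  "Tspace_gen S = \<Inter>{V. is_Tspace V \<and> S \<subseteq> V}"

definition Sym :: "nat \<Rightarrow> (nat \<Rightarrow> 'k::field ncpoly) \<Rightarrow> 'k ncpoly" where
  "Sym d v = Abs_ncpoly (\<lambda>u. \<Sum>\<sigma>\<in>{\<sigma>. \<sigma> permutes {1..d}}.
                              coeff (word_prod v (map \<sigma> [1..<d+1])) u)"

definition R1 :: "nat \<Rightarrow> 'k::field ncpoly set" where
  "R1 d = Tspace_gen {Sym d var}"

end

theory Submission
  imports Defs "HOL-Library.Sublist" "HOL-Combinatorics.Multiset_Permutations"
begin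

text \<open>
  Substituting x_j \<mapsto> x_{d+1} x_j in S_d(x_1,...,x_d) yields the sum of all words
  x_{\<sigma> 1} ... x_{\<sigma> d} in which x_{d+1} has been inserted immediately before x_j.
  As j runs over 1..d, every arrangement of x_1,...,x_{d+1} in which x_{d+1} is not the
  last letter arises exactly once, so the sum of these d substitution instances of S_d
  is S_{d+1} - S_d x_{d+1}. The substitutions x_j \<mapsto> x_j x_{d+1} give
  S_{d+1} - x_{d+1} S_d in the same way, and the remaining congruence is the difference
  of the two.
\<close>

lemma coeff_Nil [simp]: "coeff p [] = 0"
  and finite_coeff_support: "finite {w. coeff p w \<noteq> 0}"
  unfolding coeff_def using Rep_ncpoly[of p] by simp_all

lemma coeff_Abs_ncpoly:
  "finite {w. f w \<noteq> 0} \<Longrightarrow> f [] = 0 \<Longrightarrow> coeff (Abs_ncpoly f) = f"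
  unfolding coeff_def by (simp add: Abs_ncpoly_inverse)

lemma ncpoly_eqI: "(\<And>w. coeff p w = coeff q w) \<Longrightarrow> p = q"
  unfolding coeff_def by (metis Rep_ncpoly_inject ext)

lemma finite_support_sum:
  assumes "finite A" "\<And>x. x \<in> A \<Longrightarrow> finite {u. h x u \<noteq> 0}"
  shows "finite {u. (\<Sum>x\<in>A. h x u) \<noteq> (0::'a::comm_monoid_add)}"
proof -
  have "{u. (\<Sum>x\<in>A. h x u) \<noteq> 0} \<subseteq> (\<Union>x\<in>A. {u. h x u \<noteq> 0})"
    by (auto intro: ccontr sum.neutral)
  then show ?thesis using assms finite_subset by blast
qed

lemma finite_support_binop:
  assumes "f 0 0 = 0"
  shows "finite {w. f (coeff p w) (coeff q w) \<noteq> 0}"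
  by (rule finite_subset[of _ "{w. coeff p w \<noteq> 0} \<union> {w. coeff q w \<noteq> 0}"])
    (use assms finite_coeff_support[of p] finite_coeff_support[of q] in auto)

lemma coeff_nc_zero [simp]: "coeff nc_zero w = 0"
  unfolding nc_zero_def by (subst coeff_Abs_ncpoly) auto

lemma coeff_nc_add [simp]: "coeff (nc_add p q) w = coeff p w + coeff q w"
  unfolding nc_add_def
  by (subst coeff_Abs_ncpoly[OF finite_support_binop[where f = "(+)"]]) simp_all

lemma coeff_nc_diff [simp]: "coeff (nc_diff p q) w = coeff p w - coeff q w"
  unfolding nc_diff_def
  by (subst coeff_Abs_ncpoly[OF finite_support_binop[where f = "(-)"]]) simp_all

lemma coeff_nc_smult [simp]: "coeff (nc_smult c p) w = c * coeff p w"
  unfolding nc_smult_def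
  by (subst coeff_Abs_ncpoly[OF finite_support_binop[where f = "\<lambda>_ y. c * y" and p = p]]) simp_all

lemma coeff_var: "coeff (var i) = (\<lambda>w. if w = [i] then 1 else 0)"
  unfolding var_def by (rule coeff_Abs_ncpoly) auto

lemma coeff_nc_mult:
  "coeff (nc_mult p q) w = (\<Sum>i\<in>{0..length w}. coeff p (take i w) * coeff q (drop i w))"
proof -
  let ?F = "\<lambda>w. \<Sum>i\<in>{0..length w}. coeff p (take i w) * coeff q (drop i w)"
  let ?G = "(\<lambda>(a, b). a @ b) ` ({w. coeff p w \<noteq> 0} \<times> {w. coeff q w \<noteq> 0})"
  have "{w. ?F w \<noteq> 0} \<subseteq> ?G"
  proof
    fix w assume "w \<in> {w. ?F w \<noteq> 0}"
    then obtain i where "coeff p (take i w) * coeff q (drop i w) \<noteq> 0"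
      by (metis (mono_tags, lifting) mem_Collect_eq sum.neutral)
    then show "w \<in> ?G"
      by (intro image_eqI[of _ _ "(take i w, drop i w)"]) auto
  qed
  then have "finite {w. ?F w \<noteq> 0}"
    by (rule finite_subset) (simp add: finite_coeff_support)
  then show ?thesis
    unfolding nc_mult_def by (subst coeff_Abs_ncpoly) auto
qed

lemma coeff_subst:
  "coeff (subst \<phi> p) u = (\<Sum>w\<in>{w. coeff p w \<noteq> 0}. coeff p w * coeff (word_prod \<phi> w) u)"
  unfolding subst_def
proof (subst coeff_Abs_ncpoly)
  have "finite {u. coeff p w * coeff (word_prod \<phi> w) u \<noteq> 0}" for w
    by (rule finite_subset[OF _ finite_coeff_support[of "word_prod \<phi> w"]]) auto
  then show "finite {u. (\<Sum>w | coeff p w \<noteq> 0. coeff p w * coeff (word_prod \<phi> w) u) \<noteq> 0}"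
    by (intro finite_support_sum finite_coeff_support)
qed simp_all

lemma coeff_Sym:
  "coeff (Sym d v) u =
    (\<Sum>\<sigma> | \<sigma> permutes {1..d}. coeff (word_prod v (map \<sigma> [1..<d+1])) u)"
  unfolding Sym_def
  by (subst coeff_Abs_ncpoly)
    (auto intro!: finite_support_sum simp: finite_coeff_support finite_permutations)

instantiation ncpoly :: (field) ab_group_add
begin

definition zero_ncpoly :: "'a ncpoly" where "0 = nc_zero"
definition plus_ncpoly :: "'a ncpoly \<Rightarrow> 'a ncpoly \<Rightarrow> 'a ncpoly" where "p + q = nc_add p q"
definition minus_ncpoly :: "'a ncpoly \<Rightarrow> 'a ncpoly \<Rightarrow> 'a ncpoly" where "p - q = nc_diff p q"
definition uminus_ncpoly :: "'a ncpoly \<Rightarrow> 'a ncpoly" where "- p = nc_smult (- 1) p"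

instance
  by standard (auto intro!: ncpoly_eqI
      simp: zero_ncpoly_def plus_ncpoly_def minus_ncpoly_def uminus_ncpoly_def)

end

lemma coeff_zero [simp]: "coeff 0 w = 0"
  and coeff_plus [simp]: "coeff (p + q) w = coeff p w + coeff q w"
  and coeff_minus [simp]: "coeff (p - q) w = coeff p w - coeff q w"
  by (simp_all add: zero_ncpoly_def plus_ncpoly_def minus_ncpoly_def)

lemma coeff_sum: "coeff (\<Sum>i\<in>I. f i) w = (\<Sum>i\<in>I. coeff (f i) w)"
  by (induction I rule: infinite_finite_induct) simp_all

lemma coeff_mult_monomial_left:
  assumes "coeff p = (\<lambda>w. if w = a then 1 else 0)"
  shows "coeff (nc_mult p q) u = (if prefix a u then coeff q (drop (length a) u) else 0)"
proof -
  have take_eq: "take i u = a \<longleftrightarrow> i = length a \<and> prefix a u"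
    if "i \<le> length u" for i
    using that by (auto simp: prefix_def) (metis append_take_drop_id)
  have "coeff (nc_mult p q) u = (\<Sum>i\<in>{0..length u}.
      if i = length a then (if prefix a u then coeff q (drop i u) else 0) else 0)"
    unfolding coeff_nc_mult assms by (intro sum.cong) (auto simp: take_eq)
  also have "\<dots> = (if prefix a u then coeff q (drop (length a) u) else 0)"
    using prefix_length_le by (simp add: sum.delta')
  finally show ?thesis .
qed

lemma coeff_mult_monomial_right:
  assumes "coeff q = (\<lambda>w. if w = b then 1 else 0)"
  shows "coeff (nc_mult p q) u =
    (if suffix b u then coeff p (take (length u - length b) u) else 0)"
proof -
  have drop_eq: "drop i u = b \<longleftrightarrow> i = length u - length b \<and> suffix b u"
    if "i \<le> length u" for i
    using that by (auto simp: suffix_def) (metis append_take_drop_id diff_diff_cancel length_drop)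
  have "coeff (nc_mult p q) u = (\<Sum>i\<in>{0..length u}. if i = length u - length b
      then (if suffix b u then coeff p (take i u) else 0) else 0)"
    unfolding coeff_nc_mult assms by (intro sum.cong) (auto simp: drop_eq)
  also have "\<dots> = (if suffix b u then coeff p (take (length u - length b) u) else 0)"
    by (simp add: sum.delta')
  finally show ?thesis .
qed

lemma coeff_mult_monomials:
  assumes "coeff p = (\<lambda>w. if w = a then 1 else 0)" and "coeff q = (\<lambda>w. if w = b then 1 else 0)"
  shows "coeff (nc_mult p q) = (\<lambda>w. if w = a @ b then 1 else 0)"
  by (rule ext) (auto simp: coeff_mult_monomial_left[OF assms(1)] assms(2) prefix_def)

lemma coeff_mult_var_var: "coeff (nc_mult (var a) (var b)) = (\<lambda>u. if u = [a, b] then 1 else 0)"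
  using coeff_mult_monomials[OF coeff_var coeff_var] by simp

lemma coeff_mult_var_left:
  "coeff (nc_mult (var c) p) u = (if u \<noteq> [] \<and> hd u = c then coeff p (tl u) else 0)"
  by (cases u) (simp_all add: coeff_mult_monomial_left[OF coeff_var])

lemma coeff_mult_var_right:
  "coeff (nc_mult p (var c)) u = (if u \<noteq> [] \<and> last u = c then coeff p (butlast u) else 0)"
  by (cases u rule: rev_cases) (simp_all add: coeff_mult_monomial_right[OF coeff_var])

lemma coeff_var_upd_monomial:
  assumes "coeff p = (\<lambda>u. if u = b then 1 else 0)"
  shows "coeff ((var(j := p)) a) = (\<lambda>u. if u = (if a = j then b else [a]) then 1 else 0)"
  using assms by (simp add: coeff_var)

lemma coeff_word_prod_monomials:
  assumes "\<And>a. coeff (\<phi> a) = (\<lambda>u. if u = g a then 1 else 0)" and "w \<noteq> []"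
  shows "coeff (word_prod \<phi> w) = (\<lambda>u. if u = concat (map g w) then 1 else 0)"
  using assms(2)
proof (induction w rule: induct_list012)
  case (3 a b w)
  then show ?case
    using coeff_mult_monomials[OF assms(1)] by simp
qed (simp_all add: assms(1))

lemma coeff_word_prod_var:
  assumes "w \<noteq> []"
  shows "coeff (word_prod var w) = (\<lambda>u. if u = w then 1 else 0)"
proof -
  have "concat (map (\<lambda>a. [a]) w) = w"
    by (induction w) simp_all
  then show ?thesis
    using coeff_word_prod_monomials[of var "\<lambda>a. [a]", OF coeff_var assms] by simp
qed

lemma coeff_subst_monomials:
  assumes "\<And>a. coeff (\<phi> a) = (\<lambda>u. if u = g a then 1 else 0)"
  shows "coeff (subst \<phi> p) u =
    (\<Sum>w | coeff p w \<noteq> 0. if u = concat (map g w) then coeff p w else 0)"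
  unfolding coeff_subst
proof (intro sum.cong)
  fix w assume "w \<in> {w. coeff p w \<noteq> 0}"
  then have "w \<noteq> []" by auto
  then show "coeff p w * coeff (word_prod \<phi> w) u = (if u = concat (map g w) then coeff p w else 0)"
    by (simp add: coeff_word_prod_monomials[OF assms])
qed simp

section \<open>Symmetric polynomials as sums of permutation words\<close>

lemma sum_if_eq_bij_betw:
  assumes "bij_betw f X Y" and "finite Y"
  shows "(\<Sum>x\<in>X. if u = f x then c else 0) = (if u \<in> Y then c else (0::'a::comm_monoid_add))"
  using sum.reindex_bij_betw[OF assms(1), of "\<lambda>y. if u = y then c else 0"] assms(2) by simp

lemma bij_betw_map_permutes:
  assumes "distinct xs"
  shows "bij_betw (\<lambda>\<sigma>. map \<sigma> xs) {\<sigma>. \<sigma> permutes set xs}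
           (permutations_of_set (set xs))"
proof -
  let ?f = "\<lambda>\<sigma>. map \<sigma> xs"
  have "inj_on ?f {\<sigma>. \<sigma> permutes set xs}"
    by (rule inj_onI) (metis ext map_eq_conv mem_Collect_eq permutes_not_in)
  moreover have "?f ` {\<sigma>. \<sigma> permutes set xs} \<subseteq> permutations_of_set (set xs)"
    using permutations_of_set_image_permutes assms by blast
  moreover have "card {\<sigma>. \<sigma> permutes set xs} = card (permutations_of_set (set xs))"
    by (simp add: card_permutations)
  ultimately show ?thesis
    unfolding bij_betw_def by (metis card_image card_subset_eq finite_permutations_of_set)
qed

text \<open>The hypothesis d \<ge> 1 is needed: Sym 0 var = 0, but permutations_of_set {} = {[]}.\<close>

lemma coeff_Sym_var:
  assumes "d \<ge> 1"
  shows "coeff (Sym d var) u = (if u \<in> permutations_of_set {1..d} then 1 else 0)"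
proof -
  have "coeff (Sym d var) u =
      (\<Sum>\<sigma> | \<sigma> permutes {1..d}. if u = map \<sigma> [1..<d+1] then 1 else 0)"
    unfolding coeff_Sym using assms
    by (intro sum.cong) (simp_all add: coeff_word_prod_var del: upt_Suc)
  also have "\<dots> = (if u \<in> permutations_of_set {1..d} then 1 else 0)"
  proof (rule sum_if_eq_bij_betw)
    show "bij_betw (\<lambda>\<sigma>. map \<sigma> [1..<d+1]) {\<sigma>. \<sigma> permutes {1..d}}
            (permutations_of_set {1..d})"
      using bij_betw_map_permutes[of "[1..<d+1]"]
      by (simp add: atLeastLessThanSuc_atLeastAtMost del: upt_Suc)
  qed simp
  finally show ?thesis .
qed

lemma permutations_of_set_insert_middle:
  assumes "c \<notin> A"
  shows "xs @ c # ys \<in> permutations_of_set (insert c A) \<longleftrightarrow>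
    xs @ ys \<in> permutations_of_set A"
  using assms by (auto simp: permutations_of_set_def)

lemma coeff_Sym_mult_var:
  assumes "d \<ge> 1"
  shows "coeff (nc_mult (Sym d var) (var (d+1))) u =
    (if u \<in> permutations_of_set {1..d+1} \<and> last u = d+1 then 1 else 0)"
proof (cases u rule: rev_cases)
  case (snoc v a)
  then show ?thesis
    using permutations_of_set_insert_middle[of "d+1" "{1..d}" v "[]"]
    by (simp add: coeff_mult_var_right coeff_Sym_var[OF assms] atLeastAtMostSuc_conv)
qed (simp add: coeff_mult_var_right permutations_of_set_def)

lemma coeff_var_mult_Sym:
  assumes "d \<ge> 1"
  shows "coeff (nc_mult (var (d+1)) (Sym d var)) u =
    (if u \<in> permutations_of_set {1..d+1} \<and> hd u = d+1 then 1 else 0)"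
proof (cases u)
  case (Cons a v)
  then show ?thesis
    using permutations_of_set_insert_middle[of "d+1" "{1..d}" "[]" v]
    by (simp add: coeff_mult_var_left coeff_Sym_var[OF assms] atLeastAtMostSuc_conv)
qed (simp add: coeff_mult_var_left permutations_of_set_def)

lemma coeff_sum_subst_Sym:
  assumes "d \<ge> 1"
    and monomials: "\<And>j a. coeff (\<phi> j a) = (\<lambda>u. if u = g j a then 1 else 0)"
    and bij: "bij_betw (\<lambda>(j, w). concat (map (g j) w))
                ({1..d} \<times> permutations_of_set {1..d}) T"
  shows "coeff (\<Sum>j=1..d. subst (\<phi> j) (Sym d var)) u = (if u \<in> T then 1 else 0)"
proof -
  have support: "{w. coeff (Sym d var :: 'a ncpoly) w \<noteq> 0} = permutations_of_set {1..d}"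
    by (simp add: coeff_Sym_var[OF assms(1)])
  have "coeff (\<Sum>j=1..d. subst (\<phi> j) (Sym d var)) u =
      (\<Sum>j=1..d. \<Sum>w\<in>permutations_of_set {1..d}. if u = concat (map (g j) w) then 1 else 0)"
    unfolding coeff_sum coeff_subst_monomials[OF monomials] support
    by (intro sum.cong refl) (simp add: coeff_Sym_var[OF assms(1)])
  also have "\<dots> = (\<Sum>(j, w)\<in>{1..d} \<times> permutations_of_set {1..d}.
      if u = concat (map (g j) w) then 1 else 0)"
    by (simp add: sum.cartesian_product)
  also have "\<dots> = (if u \<in> T then 1 else 0)"
    by (rule trans[OF sum.cong[OF refl] sum_if_eq_bij_betw[OF bij]])
      (use bij_betw_finite[OF bij] in auto)
  finally show ?thesis .
qed

section \<open>Inserting a new letter next to a given one\<close>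

definition insert_before :: "'a \<Rightarrow> 'a \<Rightarrow> 'a list \<Rightarrow> 'a list" where
  "insert_before c j w = concat (map (\<lambda>a. if a = j then [c, j] else [a]) w)"

definition insert_after :: "'a \<Rightarrow> 'a \<Rightarrow> 'a list \<Rightarrow> 'a list" where
  "insert_after c j w = concat (map (\<lambda>a. if a = j then [j, c] else [a]) w)"

lemma insert_before_split:
  assumes "j \<notin> set xs" and "j \<notin> set ys"
  shows "insert_before c j (xs @ j # ys) = xs @ c # j # ys"
proof -
  have "j \<notin> set zs \<Longrightarrow> insert_before c j zs = zs" for zs
    by (induction zs) (auto simp: insert_before_def)
  with assms show ?thesis
    by (simp add: insert_before_def)
qed

lemma insert_after_eq_rev: "insert_after c j w = rev (insert_before c j (rev w))"
  by (induction w) (simp_all add: insert_before_def insert_after_def)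

lemma split_permutations_of_set:
  assumes "w \<in> permutations_of_set A" and "j \<in> A"
  obtains xs ys where "w = xs @ j # ys" and "j \<notin> set xs" and "j \<notin> set ys"
proof -
  from assms have "j \<in> set w" and "distinct w"
    by (auto simp: permutations_of_set_def)
  moreover from \<open>j \<in> set w\<close> obtain xs ys where "w = xs @ j # ys"
    by (metis split_list)
  ultimately show ?thesis
    using that by auto
qed

lemma inj_on_insert_before:
  assumes "c \<notin> A"
  shows "inj_on (\<lambda>(j, w). insert_before c j w) (A \<times> permutations_of_set A)"
proof (rule inj_on_inverseI
    [where g = "\<lambda>u. (hd (tl (dropWhile (\<lambda>a. a \<noteq> c) u)), removeAll c u)"])
  fix x assume "x \<in> A \<times> permutations_of_set A"
  then obtain j w where x: "x = (j, w)" and "j \<in> A" and perm: "w \<in> permutations_of_set A"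
    by blast
  then obtain xs ys where w: "w = xs @ j # ys" and "j \<notin> set xs" and "j \<notin> set ys"
    by (metis split_permutations_of_set)
  have "c \<notin> set w"
    using perm assms by (simp add: permutations_of_set_def)
  moreover from this have "dropWhile (\<lambda>a. a \<noteq> c) xs = []"
    by (auto simp: w dropWhile_eq_Nil_conv)
  ultimately show "(\<lambda>u. (hd (tl (dropWhile (\<lambda>a. a \<noteq> c) u)), removeAll c u))
      ((\<lambda>(j, w). insert_before c j w) x) = x"
    using x w \<open>j \<notin> set xs\<close> \<open>j \<notin> set ys\<close>
    by (simp add: insert_before_split dropWhile_append3)
qed

lemma image_insert_before:
  assumes "c \<notin> A"
  shows "(\<lambda>(j, w). insert_before c j w) ` (A \<times> permutations_of_set A) =
    {u \<in> permutations_of_set (insert c A). last u \<noteq> c}"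
proof (intro equalityI subsetI)
  fix u assume "u \<in> (\<lambda>(j, w). insert_before c j w) ` (A \<times> permutations_of_set A)"
  then obtain j w where u: "u = insert_before c j w"
    and "j \<in> A" and perm: "w \<in> permutations_of_set A"
    by auto
  then obtain xs ys where w: "w = xs @ j # ys" and "j \<notin> set xs" and "j \<notin> set ys"
    by (metis split_permutations_of_set)
  then have "u = xs @ c # j # ys"
    by (simp add: u insert_before_split)
  moreover have "last (j # ys) \<in> A"
    using perm w by (auto simp: permutations_of_set_def)
  ultimately show "u \<in> {u \<in> permutations_of_set (insert c A). last u \<noteq> c}"
    using perm w assms permutations_of_set_insert_middle[OF assms, of xs "j # ys"] by auto
next
  fix u assume u: "u \<in> {u \<in> permutations_of_set (insert c A). last u \<noteq> c}"
  then have "c \<in> set u"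
    by (simp add: permutations_of_set_def)
  then obtain xs zs where u_split: "u = xs @ c # zs"
    by (metis split_list)
  with u obtain j ys where zs: "zs = j # ys"
    by (cases zs) auto
  have perm: "xs @ j # ys \<in> permutations_of_set A"
    using u u_split zs permutations_of_set_insert_middle[OF assms, of xs "j # ys"] by simp
  then have "j \<in> A" and "j \<notin> set xs" and "j \<notin> set ys"
    by (auto simp: permutations_of_set_def)
  with perm show "u \<in> (\<lambda>(j, w). insert_before c j w) ` (A \<times> permutations_of_set A)"
    by (intro image_eqI[of _ _ "(j, xs @ j # ys)"]) (simp_all add: u_split zs insert_before_split)
qed

lemma bij_betw_insert_before:
  assumes "c \<notin> A"
  shows "bij_betw (\<lambda>(j, w). insert_before c j w) (A \<times> permutations_of_set A)
           {u \<in> permutations_of_set (insert c A). last u \<noteq> c}"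
  unfolding bij_betw_def using inj_on_insert_before[OF assms] image_insert_before[OF assms] by blast

lemma bij_betw_insert_after:
  assumes "c \<notin> A"
  shows "bij_betw (\<lambda>(j, w). insert_after c j w) (A \<times> permutations_of_set A)
           {u \<in> permutations_of_set (insert c A). hd u \<noteq> c}"
proof -
  have rev_X: "bij_betw (\<lambda>(j, w). (j, rev w))
      (A \<times> permutations_of_set A) (A \<times> permutations_of_set A)"
    by (rule bij_betw_byWitness[where f' = "\<lambda>(j, w). (j, rev w)"])
      (auto simp: permutations_of_set_def)
  have rev_Y: "bij_betw rev {u \<in> permutations_of_set (insert c A). last u \<noteq> c}
                 {u \<in> permutations_of_set (insert c A). hd u \<noteq> c}"
    by (rule bij_betw_byWitness[where f' = rev])
      (simp_all add: image_subset_iff permutations_of_set_def hd_rev last_rev)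
  have "(\<lambda>(j, w). insert_after c j w) =
      rev \<circ> (\<lambda>(j, w). insert_before c j w) \<circ> (\<lambda>(j, w). (j, rev w))"
    by (auto simp: insert_after_eq_rev)
  then show ?thesis
    using bij_betw_trans[OF bij_betw_trans[OF rev_X bij_betw_insert_before[OF assms]] rev_Y]
    by (simp add: comp_assoc)
qed

lemma is_Tspace_Tspace_gen: "is_Tspace (Tspace_gen S)"
  unfolding is_Tspace_def Tspace_gen_def by blast

lemma Tspace_gen_minus:
  assumes "p \<in> Tspace_gen S" and "q \<in> Tspace_gen S"
  shows "p - q \<in> Tspace_gen S"
proof -
  have "p - q = nc_add p (nc_smult (-1) q)"
    by (simp add: diff_conv_add_uminus plus_ncpoly_def uminus_ncpoly_def)
  then show ?thesis
    using is_Tspace_Tspace_gen assms unfolding is_Tspace_def by metis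
qed

lemma Tspace_gen_sum:
  "(\<And>i. i \<in> I \<Longrightarrow> f i \<in> Tspace_gen S) \<Longrightarrow>
    (\<Sum>i\<in>I. f i) \<in> Tspace_gen S"
  using is_Tspace_Tspace_gen[of S]
  by (induction I rule: infinite_finite_induct)
     (simp_all add: is_Tspace_def zero_ncpoly_def plus_ncpoly_def)

lemma Tspace_gen_subst: "p \<in> S \<Longrightarrow> subst \<phi> p \<in> Tspace_gen S"
  unfolding Tspace_gen_def is_Tspace_def by blast

lemma Sym_Suc_minus_Sym_mult_var:
  assumes "d \<ge> 1"
  shows "Sym (d+1) var - nc_mult (Sym d var) (var (d+1)) =
    (\<Sum>j=1..d. subst (var(j := nc_mult (var (d+1)) (var j))) (Sym d var) :: 'k::field ncpoly)"
    (is "?lhs = ?rhs")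
proof (rule ncpoly_eqI)
  fix u
  let ?T = "{u \<in> permutations_of_set {1..d+1}. last u \<noteq> d+1}"
  have "d + 1 \<notin> {1..d}" and "insert (d+1) {1..d} = {1..d+1}"
    by auto
  then have bij: "bij_betw (\<lambda>(j, w). concat (map (\<lambda>a. if a = j then [d+1, j] else [a]) w))
      ({1..d} \<times> permutations_of_set {1..d}) ?T"
    using bij_betw_insert_before[of "d+1" "{1..d}"] unfolding insert_before_def by simp
  have "coeff ?rhs u = (if u \<in> ?T then 1 else 0)"
    by (rule coeff_sum_subst_Sym[OF assms _ bij]) (rule coeff_var_upd_monomial[OF coeff_mult_var_var])
  then show "coeff ?lhs u = coeff ?rhs u"
    using coeff_Sym_mult_var[OF assms, of u] by (auto simp: coeff_Sym_var)
qed

lemma Sym_Suc_minus_var_mult_Sym: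
  assumes "d \<ge> 1"
  shows "Sym (d+1) var - nc_mult (var (d+1)) (Sym d var) =
    (\<Sum>j=1..d. subst (var(j := nc_mult (var j) (var (d+1)))) (Sym d var) :: 'k::field ncpoly)"
    (is "?lhs = ?rhs")
proof (rule ncpoly_eqI)
  fix u
  let ?T = "{u \<in> permutations_of_set {1..d+1}. hd u \<noteq> d+1}"
  have "d + 1 \<notin> {1..d}" and "insert (d+1) {1..d} = {1..d+1}"
    by auto
  then have bij: "bij_betw (\<lambda>(j, w). concat (map (\<lambda>a. if a = j then [j, d+1] else [a]) w))
      ({1..d} \<times> permutations_of_set {1..d}) ?T"
    using bij_betw_insert_after[of "d+1" "{1..d}"] unfolding insert_after_def by simp
  have "coeff ?rhs u = (if u \<in> ?T then 1 else 0)"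
    by (rule coeff_sum_subst_Sym[OF assms _ bij]) (rule coeff_var_upd_monomial[OF coeff_mult_var_var])
  then show "coeff ?lhs u = coeff ?rhs u"
    using coeff_var_mult_Sym[OF assms, of u] by (auto simp: coeff_Sym_var)
qed

theorem corollary2p2:
  fixes d :: nat
  assumes "d \<ge> 1"
  shows "nc_diff (Sym (d+1) var) (nc_mult (Sym d var) (var (d+1))) \<in> (R1 d :: 'k::field ncpoly set)
       \<and> nc_diff (nc_mult (Sym d var) (var (d+1))) (nc_mult (var (d+1)) (Sym d var)) \<in> (R1 d :: 'k ncpoly set)
       \<and> nc_diff (Sym (d+1) var) (nc_mult (var (d+1)) (Sym d var)) \<in> (R1 d :: 'k ncpoly set)"
proof -
  let ?S = "Sym d var :: 'k ncpoly" and ?x = "var (d+1) :: 'k ncpoly"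
  have before: "Sym (d+1) var - nc_mult ?S ?x \<in> Tspace_gen {?S}"
    unfolding Sym_Suc_minus_Sym_mult_var[OF assms] by (intro Tspace_gen_sum Tspace_gen_subst) simp
  have after: "Sym (d+1) var - nc_mult ?x ?S \<in> Tspace_gen {?S}"
    unfolding Sym_Suc_minus_var_mult_Sym[OF assms] by (intro Tspace_gen_sum Tspace_gen_subst) simp
  have "nc_mult ?S ?x - nc_mult ?x ?S =
      (Sym (d+1) var - nc_mult ?x ?S) - (Sym (d+1) var - nc_mult ?S ?x)"
    by simp
  then have "nc_mult ?S ?x - nc_mult ?x ?S \<in> Tspace_gen {?S}"
    using Tspace_gen_minus[OF after before] by simp
  with before after show ?thesis
    unfolding R1_def minus_ncpoly_def by blast
qed

end
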